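(* Let $(M,\omega)$ be a closed symplectic manifold, $a\in QH(M;\Lambda)$ a nonzero idempotent, $K\subset M$ compact, and $K_1\supset K_2\supset\cdots$ compact subsets of $M$ with $\bigcap_n K_n=K$. If $K_n$ is $a$-heavy (resp. $a$-superheavy) for all $n\ge1$, then $K$ is $a$-heavy (resp. $a$-superheavy).
   Context: $\Lambda$ is the Novikov field of series $\sum_{i\ge0}a_iT^{\lambda_i}$, $a_i\in\mathbb{Q}$, $\lambda_i\in\mathbb{R}$ strictly increasing to $+\infty$, valuation $\operatorname{val}$. For nonzero $a$ and nondegenerate $H:M\times S^1\to\mathbb{R}$, the spectral invariant is $c(a;H)=\max\{\operatorname{val}(x): x\in CF(H;\Lambda),dx=0,[x]=PSS^H_\Lambda(a)\}$ (Hamiltonian Floer complex over $\Lambda$ with energy-weighted differential, $PSS^H_\Lambda$ the PSS isomorphism), extended to continuous $H$ by continuity. For smooth $H:M\to\mathbb{R}$, $\mu(a;H)=\lim_n c(a;nH)/n$. A compact $K$ is $a$-heavy if $\mu(a;H)\le\max_K H$ for all $H\in C^\infty(M)$, and $a$-superheavy if $\mu(a;H)\ge\min_K H$ for all $H\in C^\infty(M)$. *)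

theory Defs
  imports "HOL-Analysis.Analysis" "HOL-Library.Extended_Real"
begin

(* Abstract heaviness relative to an asymptotic spectral invariant mu = mu(a;-),
   defined on a class Sm of (smooth) functions M -> real.
   max_K H and min_K H are taken in the extended reals, so that for K = {}
   they are -infinity / +infinity, as in the paper's convention. *)

definition heavy :: "(('a \<Rightarrow> real) \<Rightarrow> real) \<Rightarrow> ('a \<Rightarrow> real) set \<Rightarrow> 'a set \<Rightarrow> bool" where
  "heavy mu Sm K \<longleftrightarrow> (\<forall>H\<in>Sm. ereal (mu H) \<le> (SUP x\<in>K. ereal (H x)))"

definition superheavy :: "(('a \<Rightarrow> real) \<Rightarrow> real) \<Rightarrow> ('a \<Rightarrow> real) set \<Rightarrow> 'a set \<Rightarrow> bool" where
  "superheavy mu Sm K \<longleftrightarrow> (\<forall>H\<in>Sm. ereal (mu H) \<ge> (INF x\<in>K. ereal (H x)))"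

end

theory Submission
  imports Defs
begin

text \<open>For continuous H, the maximum of H over a decreasing sequence of compact sets
  converges to its maximum over their intersection (and likewise the minimum), since an open
  sublevel set containing the intersection already contains some member of the sequence. The
  heaviness inequalities for the K_n therefore pass to the limit.\<close>

lemma decseq_compact_subset_open:
  fixes K :: "nat \<Rightarrow> 'a::t2_space set"
  assumes compact: "\<And>n. compact (K n)" and "decseq K"
    and "open U" and "\<Inter>(range K) \<subseteq> U"
  shows "\<exists>N. K N \<subseteq> U"
proof (rule ccontr)
  assume not_in_U: "\<nexists>N. K N \<subseteq> U"
  have "(K 0 - U) \<inter> (\<Inter>n\<in>UNIV. K n) \<noteq> {}"
  proof (rule compact_imp_fip_image)
    show "compact (K 0 - U)"
      using compact \<open>open U\<close> by (simp add: compact_diff)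
    show "closed (K n)" for n
      using compact by (rule compact_imp_closed)
  next
    fix I :: "nat set" assume "finite I"
    define N where "N = Max (insert 0 I)"
    have "K N \<subseteq> K i" if "i \<in> insert 0 I" for i
      using \<open>decseq K\<close> \<open>finite I\<close> that unfolding N_def decseq_def by simp
    moreover have "K N - U \<noteq> {}"
      using not_in_U by blast
    ultimately show "(K 0 - U) \<inter> (\<Inter>i\<in>I. K i) \<noteq> {}"
      by blast
  qed
  with \<open>\<Inter>(range K) \<subseteq> U\<close> show False
    by blast
qed

lemma INF_SUP_decseq_compact:
  fixes f :: "'a::t2_space \<Rightarrow> real" and K :: "nat \<Rightarrow> 'a set"
  assumes "continuous_on UNIV f" and "\<And>n. compact (K n)" and "decseq K"
  shows "(INF n. SUP x\<in>K n. ereal (f x)) = (SUP x\<in>\<Inter>(range K). ereal (f x))"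
proof (rule antisym)
  show "(SUP x\<in>\<Inter>(range K). ereal (f x)) \<le> (INF n. SUP x\<in>K n. ereal (f x))"
    by (intro INF_greatest SUP_subset_mono) auto
  show "(INF n. SUP x\<in>K n. ereal (f x)) \<le> (SUP x\<in>\<Inter>(range K). ereal (f x))"
  proof (rule dense_ge)
    fix y assume y: "(SUP x\<in>\<Inter>(range K). ereal (f x)) < y"
    show "(INF n. SUP x\<in>K n. ereal (f x)) \<le> y"
    proof (cases y)
      case (real c)
      have "open (f -` {..<c})"
        using \<open>continuous_on UNIV f\<close> by (simp add: continuous_on_open_vimage)
      moreover have "\<Inter>(range K) \<subseteq> f -` {..<c}"
      proof
        fix x assume "x \<in> \<Inter>(range K)"
        then have "ereal (f x) \<le> (SUP x\<in>\<Inter>(range K). ereal (f x))"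
          by (rule SUP_upper)
        with y real show "x \<in> f -` {..<c}"
          using order.strict_trans1 by fastforce
      qed
      ultimately obtain N where "K N \<subseteq> f -` {..<c}"
        using decseq_compact_subset_open assms(2,3) by blast
      then have "(SUP x\<in>K N. ereal (f x)) \<le> y"
        using real by (auto intro!: SUP_least)
      then show ?thesis
        by (rule INF_lower2[OF UNIV_I])
    qed (use y in auto)
  qed
qed

lemma SUP_INF_decseq_compact:
  fixes f :: "'a::t2_space \<Rightarrow> real" and K :: "nat \<Rightarrow> 'a set"
  assumes "continuous_on UNIV f" and "\<And>n. compact (K n)" and "decseq K"
  shows "(SUP n. INF x\<in>K n. ereal (f x)) = (INF x\<in>\<Inter>(range K). ereal (f x))"
proof -
  have "continuous_on UNIV (\<lambda>x. - f x)"
    using assms(1) by (intro continuous_intros)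
  from INF_SUP_decseq_compact[OF this assms(2,3)]
  have "- (INF n. SUP x\<in>K n. - ereal (f x)) = - (SUP x\<in>\<Inter>(range K). - ereal (f x))"
    by (simp flip: uminus_ereal.simps)
  then show ?thesis
    by (simp only: ereal_INF_uminus_eq ereal_SUP_uminus_eq ereal_uminus_uminus)
qed

theorem lemma3p7:
  fixes mu :: "('a::t2_space \<Rightarrow> real) \<Rightarrow> real"
    and Sm :: "('a \<Rightarrow> real) set"
    and K :: "'a set" and Kn :: "nat \<Rightarrow> 'a set"
  assumes Sm_cont: "\<And>H. H \<in> Sm \<Longrightarrow> continuous_on UNIV H"
    and K_compact: "compact K"
    and Kn_compact: "\<And>n. compact (Kn n)"
    and Kn_decr: "\<And>n. Kn (Suc n) \<subseteq> Kn n"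
    and Kn_inter: "(\<Inter>n. Kn n) = K"
  shows "((\<forall>n. heavy mu Sm (Kn n)) \<longrightarrow> heavy mu Sm K)
       \<and> ((\<forall>n. superheavy mu Sm (Kn n)) \<longrightarrow> superheavy mu Sm K)"
proof -
  have "decseq Kn"
    using Kn_decr by (rule decseq_SucI)
  note SUP_eq = INF_SUP_decseq_compact[OF Sm_cont Kn_compact this, unfolded Kn_inter]
   and INF_eq = SUP_INF_decseq_compact[OF Sm_cont Kn_compact this, unfolded Kn_inter]
  show ?thesis
    unfolding heavy_def superheavy_def
    by (auto simp flip: SUP_eq INF_eq intro: INF_greatest SUP_least)
qed

end
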